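(* Assume $n\ge 3$. Consider finite compositions of the rotation-only operations $h_1(\varphi_1),\dots,h_{m-1}(\varphi_{m-1})$ and $f_m(\varphi_m)$ with real arguments (each occurrence of $h_i$, $f_m$ may be used any number of times). (a) Any such composition leaves all robot positions unchanged, and the vector of net orientation changes $(\Delta\theta_1,\dots,\Delta\theta_n)$ equals $A u \bmod 2\pi$, where $u\in\mathbb R^m$ has $u_i$ equal to the sum of the arguments of all occurrences of $h_i$ ($i<m$), resp. $f_m$ ($i=m$), and $A$ is the $n\times m$ matrix with $A_{j,i}=1-\alpha_{i,j}$ for $i<m$ and $A_{j,m}=1$. (b) For any three distinct robots $j_1,j_2,j_3$ and any target orientations $\beta_1,\beta_2,\beta_3$, there is such a composition after which robot $j_s$ has orientation $\beta_s$ (mod $2\pi$) for $s=1,2,3$. (c) Since $\operatorname{rank}A\le m$, for any set $S$ of more than $m$ robots there exist target orientations for the robots in $S$ that cannot be attained simultaneously by any such composition.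
   Context: A swarm of $n$ planar robots; robot $j$ has state $(x_j,y_j,\theta_j)$, $\theta_j$ mod $2\pi$; all robots have the same turning radius $r>0$. Groups $G_1,\dots,G_m$ with activation vectors $\alpha_i\in\{0,1\}^n$ ($\alpha_{i,j}=1$ iff robot $j\in G_i$); the patterns $(\alpha_{1,j},\dots,\alpha_{m-1,j})$, $j=1,\dots,n$, are pairwise distinct, none all zeros, none all ones; $G_m=\emptyset$. Dynamics: one group $\nu(t)$ active at a time, input $u(t)>0$; with $a_j=\alpha_{\nu(t),j}$: $\dot x_j=a_j\cos\theta_j u$, $\dot y_j=a_j\sin\theta_j u$, $\dot\theta_j=(1-a_j)u/r$. $f_m(\varphi)$ ($\varphi>0$) = activate $G_m$ with $\int u\,dt=r\varphi$, rotating every robot in place by $\varphi$; for real $\varphi$ it is interpreted mod $2\pi$ (as $f_m$ of a positive representative). $h_i(\varphi)$ ($i<m$, $\varphi\in\mathbb R$): an activation sequence (which exists) whose net effect leaves members of $G_i$ unchanged and keeps non-members in place with orientation increased by $\varphi$ mod $2\pi$. *)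

theory Defs
  imports Complex_Main
begin

text \<open>Robots are indexed 1..n, groups 1..m.  alpha i j holds iff robot j is in group G_i.
  A swarm state is a triple of functions (x, y, theta) on robot indices.\<close>

type_synonym rstate = "(nat \<Rightarrow> real) \<times> (nat \<Rightarrow> real) \<times> (nat \<Rightarrow> real)"

definition posx :: "rstate \<Rightarrow> nat \<Rightarrow> real" where "posx st = fst st"
definition posy :: "rstate \<Rightarrow> nat \<Rightarrow> real" where "posy st = fst (snd st)"
definition ori  :: "rstate \<Rightarrow> nat \<Rightarrow> real" where "ori st = snd (snd st)"

definition cong2pi :: "real \<Rightarrow> real \<Rightarrow> bool" where
  "cong2pi a b \<longleftrightarrow> (\<exists>k::int. a - b = 2 * pi * of_int k)"

text \<open>Exact solution of the dynamics when group i is active with total input integral s: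
  active robots (constant heading) drive straight a distance s, inactive robots turn in place
  by s / r.\<close>
definition activate :: "(nat \<Rightarrow> nat \<Rightarrow> bool) \<Rightarrow> real \<Rightarrow> nat \<Rightarrow> real \<Rightarrow> rstate \<Rightarrow> rstate" where
  "activate alpha r i s st =
     ((\<lambda>j. if alpha i j then posx st j + cos (ori st j) * s else posx st j),
      (\<lambda>j. if alpha i j then posy st j + sin (ori st j) * s else posy st j),
      (\<lambda>j. if alpha i j then ori st j else ori st j + s / r))"

definition run_seq :: "(nat \<Rightarrow> nat \<Rightarrow> bool) \<Rightarrow> real \<Rightarrow> (nat \<times> real) list \<Rightarrow> rstate \<Rightarrow> rstate" where
  "run_seq alpha r sq st = fold (\<lambda>(i, s). activate alpha r i s) sq st"

definition valid_seq :: "nat \<Rightarrow> (nat \<times> real) list \<Rightarrow> bool" where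
  "valid_seq m sq \<longleftrightarrow> (\<forall>(i, s) \<in> set sq. i \<in> {1..m} \<and> s > 0)"

definition pos_rep :: "real \<Rightarrow> real" where
  "pos_rep phi = (let t = phi - 2 * pi * of_int \<lfloor>phi / (2 * pi)\<rfloor> in if t = 0 then 2 * pi else t)"

datatype rot_op = Hop nat real | Fop real

text \<open>h_i(phi) is realised by the activation sequence hseq i phi (a parameter; its existence and
  required net effect are assumptions of the theorem).  f_m(phi) activates G_m with input
  integral r times a positive representative of phi.\<close>
definition op_eff :: "(nat \<Rightarrow> nat \<Rightarrow> bool) \<Rightarrow> real \<Rightarrow> nat \<Rightarrow> (nat \<Rightarrow> real \<Rightarrow> (nat \<times> real) list)
    \<Rightarrow> rot_op \<Rightarrow> rstate \<Rightarrow> rstate" where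
  "op_eff alpha r m hseq op st =
     (case op of Hop i phi \<Rightarrow> run_seq alpha r (hseq i phi) st
              | Fop phi \<Rightarrow> activate alpha r m (r * pos_rep phi) st)"

definition run_ops :: "(nat \<Rightarrow> nat \<Rightarrow> bool) \<Rightarrow> real \<Rightarrow> nat \<Rightarrow> (nat \<Rightarrow> real \<Rightarrow> (nat \<times> real) list)
    \<Rightarrow> rot_op list \<Rightarrow> rstate \<Rightarrow> rstate" where
  "run_ops alpha r m hseq ops st = fold (op_eff alpha r m hseq) ops st"

definition valid_ops :: "nat \<Rightarrow> rot_op list \<Rightarrow> bool" where
  "valid_ops m ops \<longleftrightarrow> (\<forall>op \<in> set ops. case op of Hop i phi \<Rightarrow> i \<in> {1..m-1} | Fop phi \<Rightarrow> True)"

definition usum :: "nat \<Rightarrow> rot_op list \<Rightarrow> nat \<Rightarrow> real" where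
  "usum m ops i =
     (if i = m then sum_list (map (\<lambda>op. case op of Fop phi \<Rightarrow> phi | Hop k phi \<Rightarrow> 0) ops)
      else sum_list (map (\<lambda>op. case op of Hop k phi \<Rightarrow> (if k = i then phi else 0) | Fop phi \<Rightarrow> 0) ops))"

definition Amat :: "(nat \<Rightarrow> nat \<Rightarrow> bool) \<Rightarrow> nat \<Rightarrow> nat \<Rightarrow> nat \<Rightarrow> real" where
  "Amat alpha m j i = (if i = m then 1 else 1 - (if alpha i j then 1 else 0))"

end

theory Submission
  imports "HOL-Analysis.Continuum_Not_Denumerable" Defs
begin

(* Every rotation-only operation fixes all positions and turns robot j by a fixed angle, so a
   composition turns robot j by (A u)_j modulo 2 pi, u being the vector of accumulated
   arguments; conversely every u is realised by applying each h_i and f_m once.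
   For three robots with pairwise distinct patterns the corresponding rows of A have rank 3:
   a 0/1 column separating two of them is, up to the all-ones column, a unit vector, and the
   three pairs produce at least two different unit vectors.
   For more than m robots the rows of A are dependent, w A = 0 with w <> 0.  Reaching the
   targets theta_j + c w_j would make c |w|^2 / (2 pi) an integer combination of the w_j,
   which fails for all c outside a countable set. *)

lemma cong2pi_refl [simp]: "cong2pi a a"
  unfolding cong2pi_def by (intro exI[of _ 0]) simp

lemma cong2pi_sym: "cong2pi a b \<Longrightarrow> cong2pi b a"
  unfolding cong2pi_def by (metis minus_diff_eq mult_minus_right of_int_minus)

lemma cong2pi_trans: "cong2pi a b \<Longrightarrow> cong2pi b c \<Longrightarrow> cong2pi a c"
  unfolding cong2pi_def by (metis diff_add_cancel add_diff_eq distrib_left of_int_add)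

lemma cong2pi_add: "cong2pi a b \<Longrightarrow> cong2pi c d \<Longrightarrow> cong2pi (a + c) (b + d)"
  unfolding cong2pi_def by (metis add_diff_add distrib_left of_int_add)

lemma cong2pi_diff_iff: "cong2pi (a - c) b \<longleftrightarrow> cong2pi a (c + b)"
  unfolding cong2pi_def by (simp add: algebra_simps)

lemma cong2pi_pos_rep: "cong2pi (pos_rep phi) phi"
proof -
  define t where "t = phi - 2 * pi * of_int \<lfloor>phi / (2 * pi)\<rfloor>"
  have "cong2pi t phi"
    unfolding cong2pi_def t_def by (intro exI[of _ "- \<lfloor>phi / (2 * pi)\<rfloor>"]) simp
  moreover have "cong2pi (2 * pi) 0"
    unfolding cong2pi_def by (intro exI[of _ 1]) simp
  ultimately show ?thesis
    unfolding pos_rep_def t_def[symmetric] Let_def by (auto intro: cong2pi_trans)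
qed

lemma rows_linearly_dependent:
  fixes R :: "'a \<Rightarrow> 'b \<Rightarrow> real"
  assumes "finite I" and "finite S" and "card I < card S"
  shows "\<exists>w. (\<exists>j\<in>S. w j \<noteq> 0) \<and> (\<forall>i\<in>I. (\<Sum>j\<in>S. w j * R j i) = 0)"
  using assms
proof (induction I arbitrary: S R rule: finite_induct)
  case empty
  then obtain j0 where "j0 \<in> S" by fastforce
  then show ?case by (intro exI[of _ "\<lambda>_. 1"]) auto
next
  case (insert i0 I)
  show ?case
  proof (cases "\<exists>j0\<in>S. R j0 i0 \<noteq> 0")
    case False
    obtain w where "\<exists>j\<in>S. w j \<noteq> 0" "\<forall>i\<in>I. (\<Sum>j\<in>S. w j * R j i) = 0"
      using insert.IH[of S R] insert.prems insert.hyps by auto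
    then show ?thesis using False by auto
  next
    case True
    then obtain j0 where j0: "j0 \<in> S" "R j0 i0 \<noteq> 0" by blast
    \<comment> \<open>Gaussian elimination: clear column i0 using row j0.\<close>
    define R' where "R' j i = R j i - R j i0 / R j0 i0 * R j0 i" for j i
    have "card I < card (S - {j0})"
      using insert.prems insert.hyps j0(1) by simp
    then obtain w' where w': "\<exists>j\<in>S - {j0}. w' j \<noteq> 0" "\<forall>i\<in>I. (\<Sum>j\<in>S - {j0}. w' j * R' j i) = 0"
      using insert.IH[of "S - {j0}" R'] insert.prems(1) by blast
    define w where "w j = (if j = j0 then - (\<Sum>j\<in>S - {j0}. w' j * R j i0) / R j0 i0 else w' j)" for j
    have reduce: "(\<Sum>j\<in>S. w j * R j i) = (\<Sum>j\<in>S - {j0}. w' j * R' j i)" for i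
    proof -
      have "(\<Sum>j\<in>S. w j * R j i) = w j0 * R j0 i + (\<Sum>j\<in>S - {j0}. w' j * R j i)"
        using insert.prems j0(1) by (simp add: sum.remove w_def)
      also have "\<dots> = (\<Sum>j\<in>S - {j0}. w' j * R' j i)"
        by (simp add: w_def R'_def sum_subtractf sum_distrib_left sum_distrib_right
            sum_divide_distrib right_diff_distrib algebra_simps)
      finally show ?thesis .
    qed
    have "R' j i0 = 0" for j using j0(2) by (simp add: R'_def)
    then show ?thesis using w' reduce by (intro exI[of _ w]) (auto simp: w_def)
  qed
qed

lemma separating_patterns_span_triples:
  fixes P :: "real \<Rightarrow> real \<Rightarrow> real \<Rightarrow> bool"
  assumes add: "\<And>a b c a' b' c'. P a b c \<Longrightarrow> P a' b' c' \<Longrightarrow> P (a + a') (b + b') (c + c')"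
    and diag: "\<And>t. P t t t"
    and gen: "\<And>i t. i \<in> I \<Longrightarrow> P (if f i then 0 else t) (if g i then 0 else t) (if h i then 0 else t)"
    and fg: "\<exists>i\<in>I. f i \<noteq> g i" and gh: "\<exists>i\<in>I. g i \<noteq> h i" and fh: "\<exists>i\<in>I. f i \<noteq> h i"
  shows "P x y z"
proof -
  \<comment> \<open>A 0/1 pattern with an odd coordinate yields, possibly after subtracting it from the
    diagonal, the unit vector in that coordinate.\<close>
  have unit1: "P t 0 0" if "i \<in> I" "f i \<noteq> g i" "f i \<noteq> h i" for i t
    using add[OF gen[OF that(1), of "-t"] diag[of t]] gen[OF that(1), of t] that
    by (cases "f i") auto
  have unit2: "P 0 t 0" if "i \<in> I" "g i \<noteq> f i" "g i \<noteq> h i" for i t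
    using add[OF gen[OF that(1), of "-t"] diag[of t]] gen[OF that(1), of t] that
    by (cases "g i") auto
  have unit3: "P 0 0 t" if "i \<in> I" "h i \<noteq> f i" "h i \<noteq> g i" for i t
    using add[OF gen[OF that(1), of "-t"] diag[of t]] gen[OF that(1), of t] that
    by (cases "h i") auto
  have "(\<forall>t. P t 0 0) \<or> (\<forall>t. P 0 t 0)" using fg unit1 unit2 by metis
  moreover have "(\<forall>t. P 0 t 0) \<or> (\<forall>t. P 0 0 t)" using gh unit2 unit3 by metis
  moreover have "(\<forall>t. P t 0 0) \<or> (\<forall>t. P 0 0 t)" using fh unit1 unit3 by metis
  moreover have "P t 0 0" if "\<forall>t. P 0 t 0" "\<forall>t. P 0 0 t" for t
    using add[OF add[OF diag[of t] that(1)[rule_format, of "-t"]] that(2)[rule_format, of "-t"]] by simp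
  moreover have "P 0 t 0" if "\<forall>t. P t 0 0" "\<forall>t. P 0 0 t" for t
    using add[OF add[OF diag[of t] that(1)[rule_format, of "-t"]] that(2)[rule_format, of "-t"]] by simp
  moreover have "P 0 0 t" if "\<forall>t. P t 0 0" "\<forall>t. P 0 t 0" for t
    using add[OF add[OF diag[of t] that(1)[rule_format, of "-t"]] that(2)[rule_format, of "-t"]] by simp
  ultimately have "P x 0 0" "P 0 y 0" "P 0 0 z" by blast+
  from add[OF add[OF this(1,2)] this(3)] show ?thesis by simp
qed

lemma countable_int_combinations:
  fixes w :: "'a \<Rightarrow> real"
  assumes "finite S"
  shows "countable {\<Sum>j\<in>S. w j * of_int (k j) | k. True}"
  using assms
proof (induction S rule: finite_induct)
  case empty
  then show ?case by simp
next
  case (insert a S)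
  let ?C = "{\<Sum>j\<in>S. w j * of_int (k j) | k. True}"
  have "{\<Sum>j\<in>insert a S. w j * of_int (k j) | k. True}
      \<subseteq> (\<lambda>(x, z :: int). w a * of_int z + x) ` (?C \<times> UNIV)"
  proof
    fix y assume "y \<in> {\<Sum>j\<in>insert a S. w j * of_int (k j) | k. True}"
    then obtain k where "y = w a * of_int (k a) + (\<Sum>j\<in>S. w j * of_int (k j))"
      using insert.hyps by auto
    then show "y \<in> (\<lambda>(x, z :: int). w a * of_int z + x) ` (?C \<times> UNIV)"
      by (intro image_eqI[of _ _ "(\<Sum>j\<in>S. w j * of_int (k j), k a)"]) auto
  qed
  moreover have "countable ((\<lambda>(x, z :: int). w a * of_int z + x) ` (?C \<times> UNIV))"
    using insert.IH by auto
  ultimately show ?case by (rule countable_subset)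
qed

lemma orthogonal_not_cong2pi_multiple:
  fixes w :: "'a \<Rightarrow> real"
  assumes "finite S" and "\<exists>j\<in>S. w j \<noteq> 0"
  shows "\<exists>c. \<forall>x. (\<Sum>j\<in>S. w j * x j) = 0 \<longrightarrow> \<not> (\<forall>j\<in>S. cong2pi (c * w j) (x j))"
proof -
  define W where "W = (\<Sum>j\<in>S. w j * w j)"
  obtain j0 where "j0 \<in> S" "w j0 \<noteq> 0" using assms(2) by blast
  then have "W > 0"
    unfolding W_def using assms(1) by (intro sum_pos2[of S j0]) (auto simp: zero_less_mult_iff linorder_neq_iff)
  obtain y where y: "y \<notin> {\<Sum>j\<in>S. w j * of_int (k j) | k. True}"
    using countable_int_combinations[OF assms(1), of w] uncountable_UNIV_real
    by (metis UNIV_eq_I)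
  define c where "c = 2 * pi * y / W"
  \<comment> \<open>Pairing the congruences with w would make y an integer combination of the w j.\<close>
  have "\<not> (\<forall>j\<in>S. cong2pi (c * w j) (x j))" if "(\<Sum>j\<in>S. w j * x j) = 0" for x
  proof
    assume "\<forall>j\<in>S. cong2pi (c * w j) (x j)"
    then obtain k where k: "\<forall>j\<in>S. c * w j - x j = 2 * pi * of_int (k j)"
      unfolding cong2pi_def by metis
    have "2 * pi * y = c * W - (\<Sum>j\<in>S. w j * x j)"
      using \<open>W > 0\<close> that by (simp add: c_def)
    also have "\<dots> = (\<Sum>j\<in>S. w j * (c * w j - x j))"
      by (simp add: W_def right_diff_distrib sum_subtractf sum_distrib_left mult.left_commute)
    also have "\<dots> = 2 * pi * (\<Sum>j\<in>S. w j * of_int (k j))"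
      using k by (simp add: sum_distrib_left mult.left_commute)
    finally have "y = (\<Sum>j\<in>S. w j * of_int (k j))" by simp
    then show False using y by blast
  qed
  then show ?thesis by blast
qed

definition op_angle :: "(nat \<Rightarrow> nat \<Rightarrow> bool) \<Rightarrow> nat \<Rightarrow> rot_op \<Rightarrow> real" where
  "op_angle alpha j op = (case op of Hop i phi \<Rightarrow> if alpha i j then 0 else phi | Fop phi \<Rightarrow> phi)"

lemma usum_Nil: "usum m [] i = 0"
  by (simp add: usum_def)

lemma usum_Cons: "usum m (op # ops) i = usum m [op] i + usum m ops i"
  by (simp add: usum_def)

lemma Amat_usum_single:
  assumes "m \<ge> 1" and "valid_ops m [op]"
  shows "(\<Sum>i = 1..m. Amat alpha m j i * usum m [op] i) = op_angle alpha j op"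
proof (cases op)
  case (Hop k phi)
  then have "k \<in> {1..m-1}" using assms(2) by (simp add: valid_ops_def)
  then have "(\<Sum>i = 1..m. Amat alpha m j i * usum m [op] i)
      = (\<Sum>i = 1..m. if i = k then Amat alpha m j k * phi else 0)"
    by (intro sum.cong) (auto simp: Hop usum_def)
  also have "\<dots> = op_angle alpha j op"
    using \<open>k \<in> {1..m-1}\<close> by (auto simp: Hop Amat_def op_angle_def)
  finally show ?thesis .
next
  case (Fop phi)
  have "(\<Sum>i = 1..m. Amat alpha m j i * usum m [op] i) = (\<Sum>i = 1..m. if i = m then phi else 0)"
    by (intro sum.cong) (auto simp: Fop usum_def Amat_def)
  then show ?thesis using assms(1) by (simp add: Fop op_angle_def)
qed

lemma sum_times_delta:
  fixes f :: "'a \<Rightarrow> 'b :: semiring_0"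
  assumes "finite A"
  shows "(\<Sum>i\<in>A. f i * (if i = k then t else 0)) = (if k \<in> A then f k * t else 0)"
proof -
  have "(\<Sum>i\<in>A. f i * (if i = k then t else 0)) = (\<Sum>i\<in>A. if i = k then f k * t else 0)"
    by (rule sum.cong) auto
  then show ?thesis using assms by simp
qed

definition ops_of_angles :: "nat \<Rightarrow> (nat \<Rightarrow> real) \<Rightarrow> rot_op list" where
  "ops_of_angles m u = map (\<lambda>i. Hop i (u i)) [1..<m] @ [Fop (u m)]"

lemma valid_ops_of_angles: "valid_ops m (ops_of_angles m u)"
  by (auto simp: valid_ops_def ops_of_angles_def)

lemma usum_ops_of_angles:
  assumes "i \<in> {1..m}"
  shows "usum m (ops_of_angles m u) i = u i"
proof (cases "i = m")
  case True
  then show ?thesis by (simp add: usum_def ops_of_angles_def comp_def)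
next
  case False
  have "usum m (ops_of_angles m u) i = (\<Sum>k\<in>{1..<m}. if k = i then u k else 0)"
    using False by (simp add: usum_def ops_of_angles_def comp_def sum_set_upt_conv_sum_list_nat[symmetric])
  then show ?thesis using assms False by simp
qed

lemma Amat_three_rows_onto:
  assumes "m \<ge> 1"
    and "\<exists>i\<in>{1..m-1}. alpha i j1 \<noteq> alpha i j2"
    and "\<exists>i\<in>{1..m-1}. alpha i j2 \<noteq> alpha i j3"
    and "\<exists>i\<in>{1..m-1}. alpha i j1 \<noteq> alpha i j3"
  shows "\<exists>u. (\<Sum>i = 1..m. Amat alpha m j1 i * u i) = d1 \<and> (\<Sum>i = 1..m. Amat alpha m j2 i * u i) = d2
           \<and> (\<Sum>i = 1..m. Amat alpha m j3 i * u i) = d3"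
proof -
  define P where "P d1 d2 d3 \<longleftrightarrow> (\<exists>u. (\<Sum>i = 1..m. Amat alpha m j1 i * u i) = d1
      \<and> (\<Sum>i = 1..m. Amat alpha m j2 i * u i) = d2 \<and> (\<Sum>i = 1..m. Amat alpha m j3 i * u i) = d3)"
    for d1 d2 d3
  have "P d1 d2 d3"
  proof (rule separating_patterns_span_triples[where I = "{1..m-1}" and f = "\<lambda>i. alpha i j1"
        and g = "\<lambda>i. alpha i j2" and h = "\<lambda>i. alpha i j3"])
    fix a b c a' b' c' assume "P a b c" "P a' b' c'"
    then obtain u u' where "(\<Sum>i = 1..m. Amat alpha m j1 i * u i) = a" "(\<Sum>i = 1..m. Amat alpha m j2 i * u i) = b"
        "(\<Sum>i = 1..m. Amat alpha m j3 i * u i) = c" "(\<Sum>i = 1..m. Amat alpha m j1 i * u' i) = a'"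
        "(\<Sum>i = 1..m. Amat alpha m j2 i * u' i) = b'" "(\<Sum>i = 1..m. Amat alpha m j3 i * u' i) = c'"
      unfolding P_def by blast
    then show "P (a + a') (b + b') (c + c')"
      unfolding P_def by (intro exI[of _ "\<lambda>i. u i + u' i"]) (simp add: distrib_left sum.distrib)
  next
    fix t
    have "(\<Sum>i = 1..m. Amat alpha m j i * (if i = m then t else 0)) = t" for j
      using assms(1) by (simp add: sum_times_delta Amat_def)
    then show "P t t t" unfolding P_def by (intro exI[of _ "\<lambda>i. if i = m then t else 0"]) simp
  next
    fix i t assume "i \<in> {1..m-1}"
    then have "(\<Sum>i' = 1..m. Amat alpha m j i' * (if i' = i then t else 0)) = (if alpha i j then 0 else t)" for j
      by (auto simp: sum_times_delta Amat_def)
    then show "P (if alpha i j1 then 0 else t) (if alpha i j2 then 0 else t) (if alpha i j3 then 0 else t)"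
      unfolding P_def by (intro exI[of _ "\<lambda>i'. if i' = i then t else 0"]) simp
  qed (use assms in auto)
  then show ?thesis unfolding P_def .
qed

locale rotation_only_swarm =
  fixes n m :: nat and r :: real and alpha :: "nat \<Rightarrow> nat \<Rightarrow> bool"
    and hseq :: "nat \<Rightarrow> real \<Rightarrow> (nat \<times> real) list"
  assumes m_pos: "m \<ge> 1"
    and r_nonzero: "r \<noteq> 0"
    and Gm_empty: "\<And>j. \<not> alpha m j"
    and hseq_effect: "\<And>i phi st j. i \<in> {1..m-1} \<Longrightarrow> j \<in> {1..n} \<Longrightarrow>
        posx (run_seq alpha r (hseq i phi) st) j = posx st j \<and>
        posy (run_seq alpha r (hseq i phi) st) j = posy st j \<and>
        cong2pi (ori (run_seq alpha r (hseq i phi) st) j) (ori st j + (if alpha i j then 0 else phi))"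
begin

lemma op_eff_effect:
  assumes "valid_ops m [op]" and "j \<in> {1..n}"
  shows "posx (op_eff alpha r m hseq op st) j = posx st j \<and>
         posy (op_eff alpha r m hseq op st) j = posy st j \<and>
         cong2pi (ori (op_eff alpha r m hseq op st) j - ori st j) (op_angle alpha j op)"
proof (cases op)
  case (Hop i phi)
  then have "i \<in> {1..m-1}" using assms(1) by (simp add: valid_ops_def)
  from hseq_effect[OF this assms(2)] show ?thesis
    by (simp add: Hop op_eff_def op_angle_def cong2pi_diff_iff)
next
  case (Fop phi)
  then show ?thesis using Gm_empty r_nonzero cong2pi_pos_rep[of phi]
    by (simp add: op_eff_def activate_def posx_def posy_def ori_def op_angle_def)
qed

lemma run_ops_effect:
  assumes "valid_ops m ops" and "j \<in> {1..n}"
  shows "posx (run_ops alpha r m hseq ops st) j = posx st j \<and>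
         posy (run_ops alpha r m hseq ops st) j = posy st j \<and>
         cong2pi (ori (run_ops alpha r m hseq ops st) j - ori st j) (\<Sum>i = 1..m. Amat alpha m j i * usum m ops i)"
  using assms(1)
proof (induction ops arbitrary: st)
  case Nil
  then show ?case by (simp add: run_ops_def usum_Nil)
next
  case (Cons op ops)
  define st' where "st' = op_eff alpha r m hseq op st"
  have valid: "valid_ops m [op]" "valid_ops m ops"
    using Cons.prems by (simp_all add: valid_ops_def)
  have run: "run_ops alpha r m hseq (op # ops) st = run_ops alpha r m hseq ops st'"
    by (simp add: run_ops_def st'_def)
  have sum: "(\<Sum>i = 1..m. Amat alpha m j i * usum m (op # ops) i)
      = op_angle alpha j op + (\<Sum>i = 1..m. Amat alpha m j i * usum m ops i)"
    using Amat_usum_single[OF m_pos valid(1)] by (subst usum_Cons) (simp add: distrib_left sum.distrib)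
  have first: "posx st' j = posx st j \<and> posy st' j = posy st j \<and>
      cong2pi (ori st' j - ori st j) (op_angle alpha j op)"
    unfolding st'_def using op_eff_effect[OF valid(1) assms(2)] .
  have rest: "posx (run_ops alpha r m hseq ops st') j = posx st' j \<and>
      posy (run_ops alpha r m hseq ops st') j = posy st' j \<and>
      cong2pi (ori (run_ops alpha r m hseq ops st') j - ori st' j) (\<Sum>i = 1..m. Amat alpha m j i * usum m ops i)"
    using Cons.IH[OF valid(2)] .
  have "cong2pi ((ori st' j - ori st j) + (ori (run_ops alpha r m hseq ops st') j - ori st' j))
      (op_angle alpha j op + (\<Sum>i = 1..m. Amat alpha m j i * usum m ops i))"
    using first rest by (blast intro: cong2pi_add)
  then show ?case
    using first rest unfolding run sum by simp
qed

lemma three_robots_reachable: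
  assumes "j1 \<in> {1..n}" "j2 \<in> {1..n}" "j3 \<in> {1..n}"
    and "\<exists>i\<in>{1..m-1}. alpha i j1 \<noteq> alpha i j2"
    and "\<exists>i\<in>{1..m-1}. alpha i j2 \<noteq> alpha i j3"
    and "\<exists>i\<in>{1..m-1}. alpha i j1 \<noteq> alpha i j3"
  shows "\<exists>ops. valid_ops m ops \<and>
           cong2pi (ori (run_ops alpha r m hseq ops st) j1) beta1 \<and>
           cong2pi (ori (run_ops alpha r m hseq ops st) j2) beta2 \<and>
           cong2pi (ori (run_ops alpha r m hseq ops st) j3) beta3"
proof -
  obtain u where u: "(\<Sum>i = 1..m. Amat alpha m j1 i * u i) = beta1 - ori st j1"
      "(\<Sum>i = 1..m. Amat alpha m j2 i * u i) = beta2 - ori st j2"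
      "(\<Sum>i = 1..m. Amat alpha m j3 i * u i) = beta3 - ori st j3"
    using Amat_three_rows_onto[OF m_pos assms(4-6)] by blast
  have "cong2pi (ori (run_ops alpha r m hseq (ops_of_angles m u) st) j - ori st j)
      (\<Sum>i = 1..m. Amat alpha m j i * u i)" if "j \<in> {1..n}" for j
  proof -
    have "(\<Sum>i = 1..m. Amat alpha m j i * usum m (ops_of_angles m u) i)
        = (\<Sum>i = 1..m. Amat alpha m j i * u i)"
      by (intro sum.cong) (simp_all add: usum_ops_of_angles)
    then show ?thesis using run_ops_effect[OF valid_ops_of_angles[of m u] that, of st] by simp
  qed
  from this[OF assms(1)] this[OF assms(2)] this[OF assms(3)] show ?thesis
    unfolding u using valid_ops_of_angles by (intro exI[of _ "ops_of_angles m u"]) (simp add: cong2pi_diff_iff)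
qed

lemma exists_unreachable_targets:
  assumes "S \<subseteq> {1..n}" and "card S > m"
  shows "\<exists>beta. \<forall>ops. valid_ops m ops \<longrightarrow>
           \<not> (\<forall>j\<in>S. cong2pi (ori (run_ops alpha r m hseq ops st) j) (beta j))"
proof -
  have "finite S" using assms(1) finite_subset by blast
  obtain w where w: "\<exists>j\<in>S. w j \<noteq> 0" "\<forall>i\<in>{1..m}. (\<Sum>j\<in>S. w j * Amat alpha m j i) = 0"
    using rows_linearly_dependent[of "{1..m}" S "Amat alpha m"] \<open>finite S\<close> assms(2) by auto
  obtain c where c: "\<forall>x. (\<Sum>j\<in>S. w j * x j) = 0 \<longrightarrow> \<not> (\<forall>j\<in>S. cong2pi (c * w j) (x j))"
    using orthogonal_not_cong2pi_multiple[OF \<open>finite S\<close> w(1)] by blast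
  show ?thesis
  proof (intro exI[of _ "\<lambda>j. ori st j + c * w j"] allI impI notI)
    fix ops assume valid: "valid_ops m ops"
      and hit: "\<forall>j\<in>S. cong2pi (ori (run_ops alpha r m hseq ops st) j) (ori st j + c * w j)"
    define x where "x j = (\<Sum>i = 1..m. Amat alpha m j i * usum m ops i)" for j
    have "(\<Sum>j\<in>S. w j * x j) = (\<Sum>i = 1..m. (\<Sum>j\<in>S. w j * Amat alpha m j i) * usum m ops i)"
      by (simp add: x_def sum_distrib_left sum_distrib_right sum.swap[of _ S] mult.assoc)
    also have "\<dots> = 0" using w(2) by simp
    finally have "(\<Sum>j\<in>S. w j * x j) = 0" .
    moreover have "cong2pi (c * w j) (x j)" if "j \<in> S" for j
    proof -
      have "cong2pi (ori (run_ops alpha r m hseq ops st) j - ori st j) (c * w j)"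
        using hit that by (simp add: cong2pi_diff_iff)
      moreover have "cong2pi (ori (run_ops alpha r m hseq ops st) j - ori st j) (x j)"
        using run_ops_effect[OF valid, of j st] that assms(1) by (auto simp: x_def)
      ultimately show ?thesis by (blast intro: cong2pi_sym cong2pi_trans)
    qed
    ultimately show False using c by blast
  qed
qed

end

theorem mainTheorem4:
  fixes n m :: nat and r :: real
    and alpha :: "nat \<Rightarrow> nat \<Rightarrow> bool"
    and hseq :: "nat \<Rightarrow> real \<Rightarrow> (nat \<times> real) list"
  assumes n3: "n \<ge> 3"
    and r_pos: "r > 0"
    and distinct_pat: "\<forall>j1 \<in> {1..n}. \<forall>j2 \<in> {1..n}. j1 \<noteq> j2 \<longrightarrow> (\<exists>i \<in> {1..m-1}. alpha i j1 \<noteq> alpha i j2)"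
    and not_zero: "\<forall>j \<in> {1..n}. \<exists>i \<in> {1..m-1}. alpha i j"
    and not_ones: "\<forall>j \<in> {1..n}. \<exists>i \<in> {1..m-1}. \<not> alpha i j"
    and Gm_empty: "\<forall>j. \<not> alpha m j"
    and h_seq: "\<forall>i \<in> {1..m-1}. \<forall>phi. valid_seq m (hseq i phi) \<and>
                 (\<forall>st. \<forall>j \<in> {1..n}.
                    posx (run_seq alpha r (hseq i phi) st) j = posx st j \<and>
                    posy (run_seq alpha r (hseq i phi) st) j = posy st j \<and>
                    cong2pi (ori (run_seq alpha r (hseq i phi) st) j)
                            (ori st j + (if alpha i j then 0 else phi)))"
  shows
    "(\<forall>ops st. valid_ops m ops \<longrightarrow>
        (\<forall>j \<in> {1..n}.
           posx (run_ops alpha r m hseq ops st) j = posx st j \<and>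
           posy (run_ops alpha r m hseq ops st) j = posy st j \<and>
           cong2pi (ori (run_ops alpha r m hseq ops st) j - ori st j)
                   (\<Sum>i = 1..m. Amat alpha m j i * usum m ops i)))
     \<and> (\<forall>j1 \<in> {1..n}. \<forall>j2 \<in> {1..n}. \<forall>j3 \<in> {1..n}.
          j1 \<noteq> j2 \<longrightarrow> j1 \<noteq> j3 \<longrightarrow> j2 \<noteq> j3 \<longrightarrow>
          (\<forall>beta1 beta2 beta3 st. \<exists>ops. valid_ops m ops \<and>
              cong2pi (ori (run_ops alpha r m hseq ops st) j1) beta1 \<and>
              cong2pi (ori (run_ops alpha r m hseq ops st) j2) beta2 \<and>
              cong2pi (ori (run_ops alpha r m hseq ops st) j3) beta3))
     \<and> (\<forall>S. S \<subseteq> {1..n} \<longrightarrow> card S > m \<longrightarrow>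
          (\<forall>st. \<exists>beta :: nat \<Rightarrow> real. \<forall>ops. valid_ops m ops \<longrightarrow>
              \<not> (\<forall>j \<in> S. cong2pi (ori (run_ops alpha r m hseq ops st) j) (beta j))))"
proof -
  have "m \<ge> 1"
  proof -
    obtain i where "i \<in> {1..m-1}" using not_zero n3 by fastforce
    then show ?thesis by auto
  qed
  moreover have "r \<noteq> 0" using r_pos by simp
  ultimately interpret rotation_only_swarm n m r alpha hseq
    by unfold_locales (use Gm_empty h_seq in blast)+
  show ?thesis
    using run_ops_effect exists_unreachable_targets distinct_pat
    by (intro conjI allI impI ballI three_robots_reachable) blast+
qed

end
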